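(* Let $T\in V_L^*$ and let $n$ be a positive integer. Let $I$ and $J$ be levels of the column $C_n$. Let $j$ be such that $v_j=(u_1,\dots,u_L)$ satisfies $u_L<h_n$. For $i\in\mathbb N$ define $t(i)=2h_{\ell(i)}$ where $\ell(i)=2^{j-1}+(i+n)2^j$. Then the sets $T^{-t(i)}J$, $i\in\mathbb N$, are independent with respect to the conditional probability measure $\mu_I$, and the sets $T^{t(i)}I$, $i\in\mathbb N$, are independent with respect to $\mu_J$.
   Context: Let $L\ge1$ and $V_L=\{(u_1,\dots,u_L)\in\mathbb N^L: u_1<u_2<\dots<u_L\}$. Fix an enumeration $V_L=\{v_j:j\in\mathbb N\}$ and define $s:\mathbb N\to V_L$ by $s(2^{j-1}+i2^j)=v_j$ for $j\ge1$, $i\ge0$. Let $(r_n)$ be a nondecreasing sequence of positive integers with $r_n>L$. Start with the column $C_1=[0,1)$ (height $h_1=1$). Given the column $C_n$ of height $h_n$, write $s(n)=(u_1,\dots,u_L)$ and $\sigma=u_1+\dots+u_L$. Cut $C_n$ into $r_n$ subcolumns of equal width numbered $1,\dots,r_n$ from left to right; place $(2L+1)h_n+\sigma$ spacers on top of subcolumn $i$ for $1\le i\le r_n-L-1$, and $h_n+u_d$ spacers on top of subcolumn $r_n-L-1+d$ for $1\le d\le L$; stack each subcolumn on top of the subcolumn to its left, forming a column of height $g_n=r_nh_n+(r_n-L-1)((2L+1)h_n+\sigma)+(Lh_n+\sigma)$; finally place $g_n$ further spacers on top to obtain $C_{n+1}$ of height $h_{n+1}=2g_n$. This defines $T$ preserving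 Lebesgue measure $\mu$ on $X=\bigcup_n C_n$; $V_L^*$ is the family of all such $T$. For a set $I$ of finite positive measure, $\mu_I(A)=\mu(A\cap I)/\mu(I)$. *)

theory Defs
  imports "HOL-Probability.Probability"
begin

text \<open>Columns are indexed by n \<ge> 1; column n has hgt n levels, level k (0-based, from the
  bottom) being the interval [lev n k, lev n k + w n) of width w n.  Subcolumns are
  numbered 0..r n - 1 from left to right (0-based), sequences s n are lists of length L.\<close>

definition is_VL :: "nat \<Rightarrow> nat list \<Rightarrow> bool" where
  "is_VL L us \<longleftrightarrow> length us = L \<and> sorted_wrt (<) us \<and> (\<forall>u\<in>set us. 0 < u)"

text \<open>Height h_n of column C_n (h_0 is an unused junk value).\<close>
fun hgt :: "nat \<Rightarrow> (nat \<Rightarrow> nat) \<Rightarrow> (nat \<Rightarrow> nat list) \<Rightarrow> nat \<Rightarrow> nat" where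
  "hgt L r s 0 = 1"
| "hgt L r s (Suc n) =
     (if n = 0 then 1
      else 2 * (r n * hgt L r s n
                + (r n - L - 1) * ((2 * L + 1) * hgt L r s n + sum_list (s n))
                + (L * hgt L r s n + sum_list (s n))))"

text \<open>Number of spacers put on top of subcolumn c (0-based) of C_n.\<close>
definition spacer :: "nat \<Rightarrow> (nat \<Rightarrow> nat) \<Rightarrow> (nat \<Rightarrow> nat list) \<Rightarrow> nat \<Rightarrow> nat \<Rightarrow> nat" where
  "spacer L r s n c =
     (if c < r n - L - 1 then (2 * L + 1) * hgt L r s n + sum_list (s n)
      else hgt L r s n + s n ! (c - (r n - L - 1)))"

text \<open>Position (in C_{n+1}) of the bottom level of subcolumn c of C_n.\<close>
definition offset :: "nat \<Rightarrow> (nat \<Rightarrow> nat) \<Rightarrow> (nat \<Rightarrow> nat list) \<Rightarrow> nat \<Rightarrow> nat \<Rightarrow> nat" where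
  "offset L r s n c = (\<Sum>c'<c. hgt L r s n + spacer L r s n c')"

definition level :: "(nat \<Rightarrow> nat \<Rightarrow> real) \<Rightarrow> (nat \<Rightarrow> real) \<Rightarrow> nat \<Rightarrow> nat \<Rightarrow> real set" where
  "level lev w n k = {lev n k ..< lev n k + w n}"

definition VLstar ::
  "nat \<Rightarrow> (nat \<Rightarrow> nat list) \<Rightarrow> (nat \<Rightarrow> nat list) \<Rightarrow> (nat \<Rightarrow> nat)
   \<Rightarrow> (nat \<Rightarrow> nat \<Rightarrow> real) \<Rightarrow> (nat \<Rightarrow> real) \<Rightarrow> real set \<Rightarrow> (real \<Rightarrow> real) \<Rightarrow> bool" where
  "VLstar L v s r lev w X T \<longleftrightarrow>
     L \<ge> 1 \<and>
     bij_betw v {1..} {us. is_VL L us} \<and>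
     (\<forall>j\<ge>1. \<forall>i. s (2 ^ (j - 1) + i * 2 ^ j) = v j) \<and>
     (\<forall>n\<ge>1. 0 < r n \<and> L < r n \<and> r n \<le> r (Suc n)) \<and>
     w 1 = 1 \<and> lev 1 0 = 0 \<and>
     (\<forall>n\<ge>1. w (Suc n) = w n / real (r n)) \<and>
     (\<forall>n\<ge>1. \<forall>c<r n. \<forall>k<hgt L r s n.
        lev (Suc n) (offset L r s n c + k) = lev n k + real c * w (Suc n)) \<and>
     (\<forall>n\<ge>1. \<forall>k<hgt L r s n. \<forall>k'<hgt L r s n.
        k \<noteq> k' \<longrightarrow> level lev w n k \<inter> level lev w n k' = {}) \<and>
     X = (\<Union>n\<in>{1..}. \<Union>k<hgt L r s n. level lev w n k) \<and>
     (\<forall>n\<ge>1. \<forall>k. k + 1 < hgt L r s n \<longrightarrow>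
        (\<forall>x\<in>level lev w n k. T x = x - lev n k + lev n (k + 1)))"

end

theory Submission
  imports Defs
begin

text \<open>For \<open>m \<ge> n\<close> every level of \<open>C\<^sub>m\<close> lies either inside a single level of
  \<open>C\<^sub>n\<close> or outside \<open>C\<^sub>n\<close>; the levels inside \<open>C\<^sub>n\<close> come in copies of \<open>C\<^sub>n\<close>
  (blocks of \<open>h\<^sub>n\<close> consecutive levels) flanked by \<open>h\<^sub>n\<close> levels outside \<open>C\<^sub>n\<close>.
  If \<open>s m = (u\<^sub>1, \<dots>, u\<^sub>L)\<close> with all \<open>u\<^sub>d < h\<^sub>n\<close>, then \<open>T\<^sup>2\<^sup>h\<^sup>m\<close> moves level \<open>b\<close>
  of the \<open>d\<close>-th of the last \<open>L\<close> subcolumns of \<open>C\<^sub>m\<close> to level \<open>b - u\<^sub>d\<close> of the next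
  subcolumn (if \<open>u\<^sub>d \<le> b\<close>), and every other level into spacers.  So on each level of
  \<open>C\<^sub>n\<close>, both \<open>T\<^sup>-\<^sup>2\<^sup>h\<^sup>m J\<close> and \<open>T\<^sup>2\<^sup>h\<^sup>m I\<close> consist of whole subcolumns of \<open>C\<^sub>m\<close>, with
  the same set of subcolumn indices for every level.  Subcolumns chosen at strictly increasing
  stages behave like independent uniform choices, which makes the conditional measures
  multiply.  The particular stages in the theorem matter only through \<open>s m = v\<^sub>j\<close>.\<close>

lemma sum_lessThan_add:
  "(\<Sum>c<a + b. f c) = (\<Sum>c<a. f c) + (\<Sum>c<b. f (a + c :: nat))"
  by (induction b) (auto simp: algebra_simps)

lemma pos_nat_dyadic_decomp:
  assumes "(m::nat) \<ge> 1" shows "\<exists>a i. m = 2 ^ a + i * 2 ^ Suc a"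
  using assms
proof (induction m rule: less_induct)
  case (less m)
  show ?case
  proof (cases "even m")
    case True
    then obtain m' where m': "m = 2 * m'" by auto
    with less obtain a i where "m' = 2 ^ a + i * 2 ^ Suc a" by fastforce
    then have "m = 2 ^ Suc a + i * 2 ^ Suc (Suc a)" using m' by simp
    then show ?thesis by blast
  next
    case False
    then have "m = 2 ^ 0 + m div 2 * 2 ^ Suc 0" by simp presburger
    then show ?thesis by blast
  qed
qed

lemma sorted_nth_le_last:
  assumes "sorted xs" "i < length xs" shows "xs ! i \<le> last xs"
proof -
  have "xs \<noteq> []" using assms(2) by auto
  then show ?thesis
    using sorted_nth_mono[OF assms(1), of i "length xs - 1"] assms(2) by (simp add: last_conv_nth)
qed

lemma indep_events_uniform_measureI:
  assumes B: "B \<in> sets M" "emeasure M B \<noteq> 0" "emeasure M B \<noteq> \<infinity>"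
    and E: "E ` I \<subseteq> sets M"
    and prod: "\<And>F. F \<subseteq> I \<Longrightarrow> finite F \<Longrightarrow> F \<noteq> {} \<Longrightarrow>
      measure M (B \<inter> \<Inter>(E ` F)) = measure M B * (\<Prod>i\<in>F. p i)"
  shows "prob_space.indep_events (uniform_measure M B) E I"
proof -
  interpret P: prob_space "uniform_measure M B"
    by (rule prob_space_uniform_measure[OF B(2,3)])
  have pos: "measure M B \<noteq> 0"
    using B(2,3) by (simp add: emeasure_eq_ennreal_measure)
  have cond: "P.prob A = measure M (B \<inter> A) / measure M B" if "A \<in> sets M" for A
    using measure_uniform_measure[OF B(2,3) that] .
  have single: "P.prob (E i) = p i" if "i \<in> I" for i
    using prod[of "{i}"] cond[of "E i"] E that pos by auto
  show ?thesis
    unfolding P.indep_events_def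
  proof (intro conjI allI impI)
    show "E ` I \<subseteq> P.events" using E by simp
  next
    fix F assume F: "F \<subseteq> I" "F \<noteq> {}" "finite F"
    have "\<Inter>(E ` F) \<in> sets M" using F E by (intro sets.finite_INT) auto
    then have "P.prob (\<Inter>(E ` F)) = (\<Prod>i\<in>F. p i)"
      using cond prod[OF F(1,3,2)] pos by simp
    also have "\<dots> = (\<Prod>i\<in>F. P.prob (E i))"
      using single F(1) by (intro prod.cong) auto
    finally show "P.prob (\<Inter>(E ` F)) = (\<Prod>i\<in>F. P.prob (E i))" .
  qed
qed

locale cutting_stacking =
  fixes L :: nat and v s :: "nat \<Rightarrow> nat list" and r :: "nat \<Rightarrow> nat"
    and lev :: "nat \<Rightarrow> nat \<Rightarrow> real" and w :: "nat \<Rightarrow> real"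
    and X :: "real set" and T :: "real \<Rightarrow> real"
  assumes VLstar: "VLstar L v s r lev w X T"
begin

abbreviation "h \<equiv> hgt L r s"
abbreviation "Lv \<equiv> level lev w"
abbreviation "off \<equiv> offset L r s"
abbreviation "sp \<equiv> spacer L r s"

lemma L_pos: "1 \<le> L"
  using VLstar by (simp add: VLstar_def)

lemma is_VL_v: "j \<ge> 1 \<Longrightarrow> is_VL L (v j)"
  using VLstar unfolding VLstar_def bij_betw_def by auto

lemma s_dyadic: "j \<ge> 1 \<Longrightarrow> s (2 ^ (j - 1) + i * 2 ^ j) = v j"
  using VLstar unfolding VLstar_def by auto

lemma L_less_r: "m \<ge> 1 \<Longrightarrow> L < r m"
  using VLstar unfolding VLstar_def by auto

lemma w_Suc: "m \<ge> 1 \<Longrightarrow> w (Suc m) = w m / real (r m)"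
  using VLstar unfolding VLstar_def by auto

lemma lev_Suc_offset:
  "m \<ge> 1 \<Longrightarrow> c < r m \<Longrightarrow> k < h m \<Longrightarrow>
    lev (Suc m) (off m c + k) = lev m k + real c * w (Suc m)"
  using VLstar unfolding VLstar_def by auto

lemma level_disjoint:
  "m \<ge> 1 \<Longrightarrow> k < h m \<Longrightarrow> k' < h m \<Longrightarrow> k \<noteq> k' \<Longrightarrow> Lv m k \<inter> Lv m k' = {}"
  using VLstar unfolding VLstar_def by auto

lemma X_eq: "X = (\<Union>m\<in>{1..}. \<Union>k<h m. Lv m k)"
  using VLstar unfolding VLstar_def by auto

lemma T_level:
  "m \<ge> 1 \<Longrightarrow> k + 1 < h m \<Longrightarrow> x \<in> Lv m k \<Longrightarrow> T x = x - lev m k + lev m (k + 1)"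
  using VLstar unfolding VLstar_def by auto

lemma length_s: "m \<ge> 1 \<Longrightarrow> length (s m) = L"
proof -
  assume "m \<ge> 1"
  then obtain a i where "m = 2 ^ a + i * 2 ^ Suc a"
    using pos_nat_dyadic_decomp by blast
  then have "m = 2 ^ (Suc a - 1) + i * 2 ^ Suc a" by simp
  then have "s m = v (Suc a)" using s_dyadic[of "Suc a" i] by simp
  then show ?thesis using is_VL_v[of "Suc a"] by (simp add: is_VL_def)
qed

lemma w_pos: "m \<ge> 1 \<Longrightarrow> w m > 0"
proof (induction m rule: nat_induct_at_least)
  case base
  then show ?case using VLstar by (simp add: VLstar_def)
next
  case (Suc m)
  then show ?case using w_Suc[of m] L_less_r[of m] by simp
qed

lemma hgt_pos: "0 < h m"
proof (induction m)
  case (Suc m)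
  then show ?case using L_less_r[of m] by (cases "m = 0") simp_all
qed simp

lemma spacer_ge: "h m \<le> sp m c"
  unfolding spacer_def by auto

lemma spacer_head: "c < r m - L - 1 \<Longrightarrow> sp m c = (2 * L + 1) * h m + sum_list (s m)"
  unfolding spacer_def by simp

lemma spacer_tail: "e < L \<Longrightarrow> sp m (r m - L - 1 + e) = h m + s m ! e"
  unfolding spacer_def by simp

lemma offset_0 [simp]: "off m 0 = 0"
  unfolding offset_def by simp

lemma offset_Suc: "off m (Suc c) = off m c + h m + sp m c"
  unfolding offset_def by simp

lemma offset_gap: "c < c' \<Longrightarrow> off m c + h m + sp m c \<le> off m c'"
proof (induction c')
  case (Suc c')
  then show ?case using offset_Suc[of m c'] by (cases "c = c'") auto
qed simp

lemma offset_mono: "c \<le> c' \<Longrightarrow> off m c \<le> off m c'"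
  using offset_gap[of c c' m] by (cases "c = c'") auto

lemma offset_add_inj:
  assumes "off m c + a = off m c' + a'" "a < h m" "a' < h m"
  shows "c = c' \<and> a = a'"
proof -
  have "c = c'"
  proof (rule ccontr)
    assume "c \<noteq> c'"
    then have "off m c + h m \<le> off m c' \<or> off m c' + h m \<le> off m c"
      using offset_gap[of c c' m] offset_gap[of c' c m] by (cases "c < c'") auto
    then show False using assms by linarith
  qed
  then show ?thesis using assms by simp
qed

text \<open>The top subcolumn \<open>r m - 1\<close> carries no spacers (its \<open>sp\<close> value is junk); the
  factor 2 accounts for the spacers put on top of the stacked column.\<close>
lemma hgt_Suc_eq_offset:
  assumes "m \<ge> 1" shows "h (Suc m) = 2 * (off m (r m - 1) + h m)"
proof -
  obtain R where R: "r m = R + L + 1"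
    using L_less_r[OF assms] by (metis add.commute less_imp_Suc_add add_Suc_right Suc_eq_plus1)
  have sum_s: "sum_list (s m) = (\<Sum>e<L. s m ! e)"
    using length_s[OF assms] by (simp add: sum_list_sum_nth atLeast0LessThan)
  have "off m (r m - 1) = (\<Sum>c<R. h m + sp m c) + (\<Sum>e<L. h m + sp m (R + e))"
    unfolding offset_def R by (simp add: sum_lessThan_add)
  also have "(\<Sum>c<R. h m + sp m c) = (\<Sum>c<R. h m + ((2 * L + 1) * h m + sum_list (s m)))"
    by (rule sum.cong) (auto simp: R spacer_head)
  also have "(\<Sum>e<L. h m + sp m (R + e)) = (\<Sum>e<L. h m + (h m + s m ! e))"
    by (rule sum.cong) (use spacer_tail[of _ m] R in auto)
  finally have "off m (r m - 1)
      = R * (h m + ((2 * L + 1) * h m + sum_list (s m))) + (2 * L * h m + sum_list (s m))"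
    by (simp add: sum.distrib sum_s)
  moreover have "h (Suc m) = 2 * (r m * h m + (r m - L - 1) * ((2 * L + 1) * h m + sum_list (s m))
      + (L * h m + sum_list (s m)))"
    using assms by simp
  ultimately show ?thesis unfolding R by (simp add: algebra_simps)
qed

lemma offset_last_ge: assumes "m \<ge> 1" shows "h m \<le> off m (r m - 1)"
proof -
  have "off m 0 + h m + sp m 0 \<le> off m (r m - 1)"
    using L_less_r[OF assms] L_pos by (intro offset_gap) simp
  then show ?thesis by simp
qed

lemma offset_return_lt:
  assumes "m \<ge> 1" "c < r m" "b < h m" shows "off m c + b + 2 * h m < h (Suc m)"
proof -
  have "off m c \<le> off m (r m - 1)" using assms by (intro offset_mono) auto
  then show ?thesis using hgt_Suc_eq_offset[OF assms(1)] offset_last_ge[OF assms(1)] assms by simp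
qed

lemma offset_lt_hgt_Suc: "m \<ge> 1 \<Longrightarrow> c < r m \<Longrightarrow> b < h m \<Longrightarrow> off m c + b < h (Suc m)"
  using offset_return_lt by fastforce

lemma hgt_Suc_ge: "m \<ge> 1 \<Longrightarrow> 2 * h m \<le> h (Suc m)"
  using hgt_Suc_eq_offset[of m] by simp

lemma hgt_mono: assumes "1 \<le> n" "n \<le> M" shows "h n \<le> h M"
  using assms(2)
proof (induction M rule: dec_induct)
  case (step M)
  then show ?case using hgt_Suc_ge[of M] assms by simp
qed simp

lemma hgt_ge: "m \<ge> 1 \<Longrightarrow> m \<le> h m"
proof (induction m rule: nat_induct_at_least)
  case (Suc m)
  then show ?case using hgt_Suc_ge[of m] hgt_pos[of m] by simp
qed (use hgt_pos in auto)

definition in_subcolumn :: "nat \<Rightarrow> nat \<Rightarrow> bool" where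
  "in_subcolumn m q \<longleftrightarrow> (\<exists>c<r m. \<exists>a<h m. q = off m c + a)"

lemma not_in_subcolumn_between:
  assumes "off m c + h m \<le> q" "c + 1 < r m \<longrightarrow> q < off m (Suc c)"
  shows "\<not> in_subcolumn m q"
  unfolding in_subcolumn_def
proof (intro notI, elim exE conjE)
  fix c' a assume c': "c' < r m" and a: "a < h m" and q: "q = off m c' + a"
  show False
  proof (cases c' c rule: linorder_cases)
    case less
    then show False using offset_gap[of c' c m] a assms(1) q by simp
  next
    case greater
    then show False using offset_mono[of "Suc c" c' m] c' assms(2) q by simp
  qed (use a assms q in simp)
qed

lemma level_nonempty: "m \<ge> 1 \<Longrightarrow> Lv m p \<noteq> {}"
  using w_pos[of m] unfolding level_def by auto

lemma sets_level [measurable]: "Lv m p \<in> sets lebesgue"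
  unfolding level_def by simp

lemma emeasure_level: "m \<ge> 1 \<Longrightarrow> emeasure lebesgue (Lv m p) = ennreal (w m)"
  using w_pos[of m] unfolding level_def by simp

lemma measure_level: "m \<ge> 1 \<Longrightarrow> measure lebesgue (Lv m p) = w m"
  using w_pos[of m] unfolding level_def by simp

lemma level_eq_of_mem:
  "m \<ge> 1 \<Longrightarrow> k < h m \<Longrightarrow> k' < h m \<Longrightarrow> x \<in> Lv m k \<Longrightarrow> x \<in> Lv m k' \<Longrightarrow> k = k'"
  using level_disjoint by blast

lemma level_subset_X: "m \<ge> 1 \<Longrightarrow> p < h m \<Longrightarrow> Lv m p \<subseteq> X"
  using X_eq by auto

lemma level_Suc_offset:
  assumes "m \<ge> 1" "c < r m" "a < h m"
  shows "Lv (Suc m) (off m c + a)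
    = {lev m a + real c * w (Suc m) ..< lev m a + real c * w (Suc m) + w (Suc m)}"
  unfolding level_def using lev_Suc_offset[OF assms] by simp

lemma level_Suc_subset:
  assumes "m \<ge> 1" "c < r m" "a < h m"
  shows "Lv (Suc m) (off m c + a) \<subseteq> Lv m a"
proof -
  have wm: "w m = real (r m) * w (Suc m)"
    using w_Suc[OF assms(1)] L_less_r[OF assms(1)] by simp
  have "real (Suc c) * w (Suc m) \<le> real (r m) * w (Suc m)"
    using assms(2) w_pos[of "Suc m"] by (intro mult_right_mono) auto
  moreover have "0 \<le> real c * w (Suc m)" using w_pos[of "Suc m"] by simp
  ultimately show ?thesis
    unfolding level_Suc_offset[OF assms] unfolding level_def wm by (auto simp: algebra_simps)
qed

lemma level_eq_Union_Suc:
  assumes "m \<ge> 1" "a < h m"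
  shows "Lv m a = (\<Union>c<r m. Lv (Suc m) (off m c + a))"
proof
  show "Lv m a \<subseteq> (\<Union>c<r m. Lv (Suc m) (off m c + a))"
  proof
    fix x assume x: "x \<in> Lv m a"
    define w' where "w' = w (Suc m)"
    have w': "w' > 0" "w m = real (r m) * w'"
      using w_pos[of "Suc m"] w_Suc[OF assms(1)] L_less_r[OF assms(1)] unfolding w'_def by auto
    define c where "c = nat \<lfloor>(x - lev m a) / w'\<rfloor>"
    have "0 \<le> (x - lev m a) / w'" "(x - lev m a) / w' < real (r m)"
      using x w' unfolding level_def by (auto simp: field_simps)
    then have c: "real c \<le> (x - lev m a) / w'" "(x - lev m a) / w' < real c + 1" "c < r m"
      unfolding c_def by linarith+
    then have "lev m a + real c * w' \<le> x" "x < lev m a + real c * w' + w'"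
      using w' by (auto simp: field_simps)
    then have "x \<in> Lv (Suc m) (off m c + a)"
      unfolding level_Suc_offset[OF assms(1) c(3) assms(2)] w'_def by simp
    then show "x \<in> (\<Union>c<r m. Lv (Suc m) (off m c + a))" using c(3) by blast
  qed
qed (use level_Suc_subset assms in blast)

lemma level_Suc_disjoint_if_not_in_subcolumn:
  assumes "m \<ge> 1" "q < h (Suc m)" "\<not> in_subcolumn m q" "a < h m"
  shows "Lv (Suc m) q \<inter> Lv m a = {}"
proof (rule ccontr)
  assume "Lv (Suc m) q \<inter> Lv m a \<noteq> {}"
  then obtain x c where c: "c < r m" "x \<in> Lv (Suc m) (off m c + a)" "x \<in> Lv (Suc m) q"
    using level_eq_Union_Suc[OF assms(1,4)] by blast
  moreover have "off m c + a < h (Suc m)" using offset_lt_hgt_Suc[OF assms(1) c(1) assms(4)] .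
  ultimately have "q = off m c + a"
    using level_eq_of_mem[of "Suc m" q "off m c + a" x] assms(2) by simp
  then show False using assms(3,4) c(1) unfolding in_subcolumn_def by blast
qed

lemma level_subset_Union_column:
  assumes "1 \<le> n" "n \<le> M" "\<kappa> < h n" shows "Lv n \<kappa> \<subseteq> (\<Union>a<h M. Lv M a)"
  using assms(2)
proof (induction M rule: dec_induct)
  case (step M)
  have M: "M \<ge> 1" using step.hyps(1) assms(1) by simp
  have "Lv M a \<subseteq> (\<Union>a<h (Suc M). Lv (Suc M) a)" if a: "a < h M" for a
  proof
    fix x assume "x \<in> Lv M a"
    then obtain c where "c < r M" "x \<in> Lv (Suc M) (off M c + a)"
      using level_eq_Union_Suc[OF M a] by blast
    then show "x \<in> (\<Union>a<h (Suc M). Lv (Suc M) a)" using offset_lt_hgt_Suc[OF M _ a] by blast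
  qed
  then show ?case using step.IH by blast
qed (use assms in blast)

section \<open>Copies of a column inside later columns\<close>

definition outside :: "nat \<Rightarrow> nat \<Rightarrow> nat \<Rightarrow> bool" where
  "outside n M q \<longleftrightarrow> (\<forall>\<kappa><h n. Lv M q \<inter> Lv n \<kappa> = {})"

lemma outside_subset: "Lv M' q \<subseteq> Lv M a \<Longrightarrow> outside n M a \<Longrightarrow> outside n M' q"
  unfolding outside_def by blast

lemma outside_if_not_in_subcolumn:
  assumes "1 \<le> n" "n \<le> M" "q < h (Suc M)" "\<not> in_subcolumn M q"
  shows "outside n (Suc M) q"
  unfolding outside_def
  using level_subset_Union_column[OF assms(1,2)]
    level_Suc_disjoint_if_not_in_subcolumn[of M q] assms by fastforce

lemma level_inside_or_outside:
  assumes "1 \<le> n" "n \<le> M" "a < h M"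
  shows "(\<exists>\<kappa><h n. Lv M a \<subseteq> Lv n \<kappa>) \<or> outside n M a"
  using assms(2,3)
proof (induction M arbitrary: a rule: dec_induct)
  case (step M q)
  show ?case
  proof (cases "in_subcolumn M q")
    case True
    then obtain c a where ca: "c < r M" "a < h M" "q = off M c + a"
      unfolding in_subcolumn_def by blast
    have "M \<ge> 1" using step.hyps(1) assms(1) by simp
    then have "Lv (Suc M) q \<subseteq> Lv M a" using level_Suc_subset ca by simp
    then show ?thesis using step.IH[OF ca(2)] outside_subset by blast
  next
    case False
    then show ?thesis using outside_if_not_in_subcolumn assms(1) step by blast
  qed
qed blast

lemma level_subset_if_meets:
  assumes "1 \<le> n" "n \<le> M" "a < h M" "\<kappa> < h n" "x \<in> Lv M a" "x \<in> Lv n \<kappa>"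
  shows "Lv M a \<subseteq> Lv n \<kappa>"
  using level_inside_or_outside[OF assms(1-3)] level_eq_of_mem[OF assms(1) _ assms(4)] assms
  unfolding outside_def by blast

lemma level_inside_unique:
  assumes "1 \<le> n" "M \<ge> 1" "Lv M a \<subseteq> Lv n \<kappa>" "Lv M a \<subseteq> Lv n \<kappa>'" "\<kappa> < h n" "\<kappa>' < h n"
  shows "\<kappa> = \<kappa>'"
  using level_nonempty[OF assms(2)] level_eq_of_mem[OF assms(1,5,6)] assms(3,4) by blast

lemma in_subcolumn_if_inside:
  assumes "1 \<le> n" "n \<le> M" "q < h (Suc M)" "\<kappa> < h n" "Lv (Suc M) q \<subseteq> Lv n \<kappa>"
  shows "in_subcolumn M q"
proof -
  have "Lv (Suc M) q \<noteq> {}" by (rule level_nonempty) simp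
  then show ?thesis
    using outside_if_not_in_subcolumn[OF assms(1-3)] assms(4,5) unfolding outside_def by blast
qed

definition copy_at :: "nat \<Rightarrow> nat \<Rightarrow> nat \<Rightarrow> bool" where
  "copy_at n M \<beta> \<longleftrightarrow> \<beta> + h n \<le> h M \<and> (\<forall>\<kappa><h n. Lv M (\<beta> + \<kappa>) \<subseteq> Lv n \<kappa>)
     \<and> (\<forall>e. 1 \<le> e \<and> e \<le> h n \<and> e \<le> \<beta> \<longrightarrow> outside n M (\<beta> - e))
     \<and> (\<forall>e<h n. \<beta> + h n + e < h M \<longrightarrow> outside n M (\<beta> + h n + e))"

lemma copy_at_self: "copy_at n n 0"
  unfolding copy_at_def by simp

lemma copy_at_Suc_below:
  assumes "1 \<le> n" "n \<le> M" "copy_at n M \<beta>" "c < r M"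
    and e: "1 \<le> e" "e \<le> h n" "e \<le> off M c + \<beta>"
  shows "outside n (Suc M) (off M c + \<beta> - e)"
proof (cases "e \<le> \<beta>")
  case True
  have "\<beta> - e < h M" using assms(3) e(1) hgt_pos[of n] unfolding copy_at_def by linarith
  then have "Lv (Suc M) (off M c + (\<beta> - e)) \<subseteq> Lv M (\<beta> - e)"
    using level_Suc_subset assms by simp
  then show ?thesis using outside_subset assms(3) e True unfolding copy_at_def by fastforce
next
  case False
  then obtain c0 where c0: "c = Suc c0" using e(3) by (cases c) auto
  have "h n \<le> h M" using hgt_mono assms(1,2) .
  moreover have "off M c = off M c0 + h M + sp M c0" using c0 offset_Suc by simp
  ultimately have "off M c0 + h M \<le> off M c + \<beta> - e"
    using spacer_ge[of M c0] e(2) by linarith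
  moreover have below: "off M c + \<beta> - e < off M c" using False e(3) by linarith
  ultimately have "\<not> in_subcolumn M (off M c + \<beta> - e)"
    using c0 by (intro not_in_subcolumn_between[of M c0]) auto
  moreover have "off M c + \<beta> - e < h (Suc M)"
    using offset_lt_hgt_Suc[OF _ assms(4) hgt_pos] assms(1,2) below by simp
  ultimately show ?thesis using outside_if_not_in_subcolumn assms(1,2) by blast
qed

lemma copy_at_Suc_above:
  assumes "1 \<le> n" "n \<le> M" "copy_at n M \<beta>" "c < r M"
    and e: "e < h n" "off M c + \<beta> + h n + e < h (Suc M)"
  shows "outside n (Suc M) (off M c + \<beta> + h n + e)"
proof (cases "\<beta> + h n + e < h M")
  case True
  then have "Lv (Suc M) (off M c + (\<beta> + h n + e)) \<subseteq> Lv M (\<beta> + h n + e)"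
    using level_Suc_subset assms by simp
  then show ?thesis
    using outside_subset assms(3) e True unfolding copy_at_def by (simp add: add.assoc)
next
  case False
  have "h n \<le> h M" using hgt_mono assms(1,2) .
  then have "off M c + \<beta> + h n + e < off M (Suc c)"
    using offset_Suc[of M c] spacer_ge[of M c] assms(3) e(1) unfolding copy_at_def by linarith
  then have "\<not> in_subcolumn M (off M c + \<beta> + h n + e)"
    using False by (intro not_in_subcolumn_between) auto
  then show ?thesis using outside_if_not_in_subcolumn assms(1,2) e(2) by blast
qed

lemma copy_at_Suc:
  assumes "1 \<le> n" "n \<le> M" "copy_at n M \<beta>" "c < r M"
  shows "copy_at n (Suc M) (off M c + \<beta>)"
proof -
  have M: "M \<ge> 1" using assms by simp
  have "\<beta> + h n \<le> h M" using assms(3) unfolding copy_at_def by simp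
  then have "off M c + \<beta> + h n \<le> h (Suc M)"
    using offset_lt_hgt_Suc[OF M assms(4), of "h M - 1"] hgt_pos[of M] by simp
  moreover have "Lv (Suc M) (off M c + \<beta> + \<kappa>) \<subseteq> Lv n \<kappa>" if "\<kappa> < h n" for \<kappa>
    using level_Suc_subset[OF M assms(4), of "\<beta> + \<kappa>"] assms(3) that
    unfolding copy_at_def by (auto simp: add.assoc)
  ultimately show ?thesis
    using copy_at_Suc_below[OF assms] copy_at_Suc_above[OF assms] unfolding copy_at_def by auto
qed

lemma copy_at_if_inside:
  assumes "1 \<le> n" "n \<le> M" "p < h M" "\<kappa> < h n" "Lv M p \<subseteq> Lv n \<kappa>"
  shows "\<exists>\<beta>. p = \<beta> + \<kappa> \<and> copy_at n M \<beta>"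
  using assms(2-5)
proof (induction M arbitrary: p \<kappa> rule: dec_induct)
  case base
  then have "p = \<kappa>" using level_inside_unique[OF assms(1,1) _ order.refl] by blast
  then show ?case using copy_at_self by auto
next
  case (step M q \<kappa>)
  have M: "M \<ge> 1" using step assms(1) by simp
  obtain c a where ca: "c < r M" "a < h M" "q = off M c + a"
    using in_subcolumn_if_inside[OF assms(1) step.hyps(1) step.prems] unfolding in_subcolumn_def by blast
  have sub: "Lv (Suc M) q \<subseteq> Lv M a" using level_Suc_subset[OF M ca(1,2)] ca(3) by simp
  obtain x where "x \<in> Lv (Suc M) q" using level_nonempty[of "Suc M" q] by auto
  then have "Lv M a \<subseteq> Lv n \<kappa>"
    using level_subset_if_meets[OF assms(1) step.hyps(1) ca(2) step.prems(2)] sub step.prems(3) by blast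
  then obtain \<beta> where "a = \<beta> + \<kappa>" "copy_at n M \<beta>"
    using step.IH[OF ca(2) step.prems(2)] by blast
  then show ?case
    using copy_at_Suc[OF assms(1) step.hyps(1) _ ca(1)] ca(3) by (metis add.assoc)
qed

lemma T_iter_level:
  assumes "m \<ge> 1" "p + t < h m" "x \<in> Lv m p"
  shows "(T ^^ t) x = x - lev m p + lev m (p + t) \<and> (T ^^ t) x \<in> Lv m (p + t)"
  using assms(2)
proof (induction t)
  case 0
  then show ?case using assms(3) by simp
next
  case (Suc t)
  then have IH: "(T ^^ t) x = x - lev m p + lev m (p + t)" "(T ^^ t) x \<in> Lv m (p + t)"
    by auto
  then have "(T ^^ Suc t) x = x - lev m p + lev m (p + Suc t)"
    using T_level[OF assms(1) _ IH(2)] Suc.prems by simp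
  moreover have "x - lev m p + lev m (p + Suc t) \<in> Lv m (p + Suc t)"
    using IH unfolding level_def by auto
  ultimately show ?case by simp
qed

lemma T_iter_mem_level: "m \<ge> 1 \<Longrightarrow> p + t < h m \<Longrightarrow> x \<in> Lv m p \<Longrightarrow> (T ^^ t) x \<in> Lv m (p + t)"
  using T_iter_level by blast

lemma T_iter_image_level:
  assumes "m \<ge> 1" "p + t < h m"
  shows "(T ^^ t) ` Lv m p = Lv m (p + t)"
proof
  show "Lv m (p + t) \<subseteq> (T ^^ t) ` Lv m p"
  proof
    fix z assume z: "z \<in> Lv m (p + t)"
    define x where "x = z - lev m (p + t) + lev m p"
    have x: "x \<in> Lv m p" using z unfolding x_def level_def by auto
    then have "(T ^^ t) x = z" using T_iter_level[OF assms x] x_def by simp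
    then show "z \<in> (T ^^ t) ` Lv m p" using x by blast
  qed
qed (use T_iter_mem_level assms in blast)

lemma exists_level_with_room:
  assumes "x \<in> X" shows "\<exists>M\<ge>n. \<exists>p. p + t < h M \<and> x \<in> Lv M p"
proof -
  obtain M0 p0 where M0: "M0 \<ge> 1" "p0 < h M0" "x \<in> Lv M0 p0" using assms X_eq by auto
  define M where "M = max M0 (max n t)"
  have M: "M \<ge> 1" "M0 \<le> M" "n \<le> Suc M" "t \<le> M" using M0 unfolding M_def by auto
  then obtain p where p: "p < h M" "x \<in> Lv M p"
    using level_subset_Union_column[OF M0(1) M(2) M0(2)] M0(3) by blast
  then obtain c where c: "c < r M" "x \<in> Lv (Suc M) (off M c + p)"
    using level_eq_Union_Suc[OF M(1) p(1)] by blast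
  have "off M c + p + t < h (Suc M)"
    using offset_return_lt[OF M(1) c(1) p(1)] hgt_ge[OF M(1)] M(4) by linarith
  then show ?thesis using c(2) M(3) by blast
qed

lemma sets_preimage_level:
  assumes "1 \<le> n" "\<kappa> < h n" shows "{x \<in> X. (T ^^ t) x \<in> Lv n \<kappa>} \<in> sets lebesgue"
proof -
  define S where "S = {(M, p). n \<le> M \<and> p + t < h M \<and> Lv M (p + t) \<subseteq> Lv n \<kappa>}"
  have "{x \<in> X. (T ^^ t) x \<in> Lv n \<kappa>} = (\<Union>Mp\<in>S. Lv (fst Mp) (snd Mp))"
  proof (intro equalityI subsetI)
    fix x assume "x \<in> {x \<in> X. (T ^^ t) x \<in> Lv n \<kappa>}"
    then have x: "x \<in> X" "(T ^^ t) x \<in> Lv n \<kappa>" by auto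
    then obtain M p where Mp: "n \<le> M" "p + t < h M" "x \<in> Lv M p"
      using exists_level_with_room by blast
    have M: "M \<ge> 1" using Mp(1) assms(1) by simp
    have "(T ^^ t) x \<in> Lv M (p + t)" by (rule T_iter_mem_level[OF M Mp(2,3)])
    then have "Lv M (p + t) \<subseteq> Lv n \<kappa>"
      using level_subset_if_meets[OF assms(1) Mp(1,2) assms(2)] x(2) by blast
    then show "x \<in> (\<Union>Mp\<in>S. Lv (fst Mp) (snd Mp))" using Mp unfolding S_def by force
  next
    fix x assume "x \<in> (\<Union>Mp\<in>S. Lv (fst Mp) (snd Mp))"
    then obtain M p where Mp: "n \<le> M" "p + t < h M" "Lv M (p + t) \<subseteq> Lv n \<kappa>" "x \<in> Lv M p"
      unfolding S_def by auto
    have M: "M \<ge> 1" using Mp(1) assms(1) by simp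
    have "p < h M" using Mp(2) by simp
    then have "x \<in> X" using level_subset_X[OF M] Mp(4) by blast
    moreover have "(T ^^ t) x \<in> Lv n \<kappa>" using T_iter_mem_level[OF M Mp(2,4)] Mp(3) by blast
    ultimately show "x \<in> {x \<in> X. (T ^^ t) x \<in> Lv n \<kappa>}" by simp
  qed
  also have "\<dots> \<in> sets lebesgue"
    by (rule sets.countable_UN'') (auto intro: countableI_type)
  finally show ?thesis .
qed

lemma level_eq_Union_inside:
  assumes "1 \<le> n" "n \<le> M" "\<kappa> < h n"
  shows "Lv n \<kappa> = (\<Union>a\<in>{a. a < h M \<and> Lv M a \<subseteq> Lv n \<kappa>}. Lv M a)"
proof
  show "Lv n \<kappa> \<subseteq> (\<Union>a\<in>{a. a < h M \<and> Lv M a \<subseteq> Lv n \<kappa>}. Lv M a)"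
  proof
    fix x assume x: "x \<in> Lv n \<kappa>"
    then obtain a where a: "a < h M" "x \<in> Lv M a" using level_subset_Union_column[OF assms] by blast
    have "Lv M a \<subseteq> Lv n \<kappa>" by (rule level_subset_if_meets[OF assms(1,2) a(1) assms(3) a(2) x])
    then show "x \<in> (\<Union>a\<in>{a. a < h M \<and> Lv M a \<subseteq> Lv n \<kappa>}. Lv M a)" using a by blast
  qed
qed blast

lemma image_level_eq_Union:
  assumes "1 \<le> n" "n \<le> m" "\<kappa> < h n"
  shows "(T ^^ (2 * h m)) ` Lv n \<kappa>
    = (\<Union>a\<in>{a. a < h m \<and> Lv m a \<subseteq> Lv n \<kappa>}. \<Union>c<r m. Lv (Suc m) (off m c + a + 2 * h m))"
proof -
  have m: "m \<ge> 1" using assms by simp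
  define A where "A = {a. a < h m \<and> Lv m a \<subseteq> Lv n \<kappa>}"
  have "Lv n \<kappa> = (\<Union>a\<in>A. Lv m a)"
    unfolding A_def by (rule level_eq_Union_inside[OF assms])
  also have "\<dots> = (\<Union>a\<in>A. \<Union>c<r m. Lv (Suc m) (off m c + a))"
    using level_eq_Union_Suc[OF m] unfolding A_def by (intro SUP_cong) auto
  finally have "(T ^^ (2 * h m)) ` Lv n \<kappa> = (\<Union>a\<in>A. \<Union>c<r m. (T ^^ (2 * h m)) ` Lv (Suc m) (off m c + a))"
    by (simp only: image_UN)
  also have "\<dots> = (\<Union>a\<in>A. \<Union>c<r m. Lv (Suc m) (off m c + a + 2 * h m))"
    using T_iter_image_level[of "Suc m"] offset_return_lt[OF m] unfolding A_def
    by (intro SUP_cong refl) simp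
  finally show ?thesis unfolding A_def .
qed

lemma sets_image_level:
  assumes "1 \<le> n" "n \<le> m" "\<kappa> < h n"
  shows "(T ^^ (2 * h m)) ` Lv n \<kappa> \<in> sets lebesgue"
  unfolding image_level_eq_Union[OF assms]
  by (intro sets.countable_UN'' sets.finite_UN) (auto intro: countableI_type)

section \<open>The return map of a stage\<close>

lemma return_to_next_subcolumn:
  assumes "m \<ge> 1" "e < L" "c = r m - L - 1 + e" "s m ! e \<le> b"
  shows "off m c + b + 2 * h m = off m (Suc c) + (b - s m ! e) \<and> Suc c < r m"
proof
  have "sp m c = h m + s m ! e" using spacer_tail[OF assms(2)] assms(3) by simp
  then show "off m c + b + 2 * h m = off m (Suc c) + (b - s m ! e)"
    using offset_Suc[of m c] assms(4) by simp
  show "Suc c < r m" using L_less_r[OF assms(1)] assms(2,3) by simp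
qed

lemma return_not_in_subcolumn:
  assumes "m \<ge> 1" "b < h m" "\<not> (\<exists>e<L. c = r m - L - 1 + e \<and> s m ! e \<le> b)"
  shows "\<not> in_subcolumn m (off m c + b + 2 * h m)"
proof (rule not_in_subcolumn_between)
  show "c + 1 < r m \<longrightarrow> off m c + b + 2 * h m < off m (Suc c)"
  proof
    assume c: "c + 1 < r m"
    show "off m c + b + 2 * h m < off m (Suc c)"
    proof (cases "c < r m - L - 1")
      case True
      have "3 * h m \<le> (2 * L + 1) * h m" using L_pos by (intro mult_le_mono1) simp
      then show ?thesis using offset_Suc[of m c] spacer_head[OF True] assms(2) by linarith
    next
      case False
      define e where "e = c - (r m - L - 1)"
      have e: "e < L" "c = r m - L - 1 + e" using False c L_less_r[OF assms(1)] e_def by auto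
      then have "b < s m ! e" using assms(3) by auto
      then show ?thesis using offset_Suc[of m c] spacer_tail[OF e(1)] e(2) by simp
    qed
  qed
qed simp

lemma return_level_inside:
  assumes "m \<ge> 1" "copy_at n m \<beta>" "\<kappa> < h n" "e < L" "c = r m - L - 1 + e" "s m ! e \<le> \<kappa>"
  shows "Lv (Suc m) (off m c + (\<beta> + \<kappa>) + 2 * h m) \<subseteq> Lv n (\<kappa> - s m ! e)"
proof -
  have q: "off m c + (\<beta> + \<kappa>) + 2 * h m = off m (Suc c) + (\<beta> + (\<kappa> - s m ! e))" "Suc c < r m"
    using return_to_next_subcolumn[OF assms(1,4,5), of "\<beta> + \<kappa>"] assms(6) by auto
  have "\<kappa> - s m ! e < h n" using assms(3) by linarith
  moreover have "\<beta> + h n \<le> h m" using assms(2) unfolding copy_at_def by simp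
  ultimately have "Lv (Suc m) (off m (Suc c) + (\<beta> + (\<kappa> - s m ! e))) \<subseteq> Lv m (\<beta> + (\<kappa> - s m ! e))"
    using level_Suc_subset[OF assms(1) q(2)] by simp
  also have "\<dots> \<subseteq> Lv n (\<kappa> - s m ! e)"
    using assms(2) \<open>\<kappa> - s m ! e < h n\<close> unfolding copy_at_def by simp
  finally show ?thesis by (simp only: q(1))
qed

lemma return_level_outside:
  assumes "1 \<le> n" "n \<le> m" "copy_at n m \<beta>" "\<kappa> < h n" "c < r m"
    and small: "\<forall>e<L. s m ! e < h n"
    and not_tail: "\<not> (\<exists>e<L. c = r m - L - 1 + e \<and> s m ! e \<le> \<kappa>)"
  shows "outside n (Suc m) (off m c + (\<beta> + \<kappa>) + 2 * h m)"
proof -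
  have m: "m \<ge> 1" using assms by simp
  have b: "\<beta> + \<kappa> < h m" using assms(3,4) unfolding copy_at_def by simp
  show ?thesis
  proof (cases "\<exists>e<L. c = r m - L - 1 + e \<and> s m ! e \<le> \<beta> + \<kappa>")
    case True
    then obtain e where e: "e < L" "c = r m - L - 1 + e" "s m ! e \<le> \<beta> + \<kappa>" by blast
    have "\<kappa> < s m ! e" using not_tail e(1,2) by auto
    define d where "d = s m ! e - \<kappa>"
    have d: "1 \<le> d" "d \<le> h n" "d \<le> \<beta>"
      using \<open>\<kappa> < s m ! e\<close> small e(1,3) unfolding d_def by auto
    have q: "off m c + (\<beta> + \<kappa>) + 2 * h m = off m (Suc c) + (\<beta> - d)" "Suc c < r m"
      using return_to_next_subcolumn[OF m e] \<open>\<kappa> < s m ! e\<close> e(3) unfolding d_def by auto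
    have "\<beta> - d < h m" using b by simp
    then have "Lv (Suc m) (off m (Suc c) + (\<beta> - d)) \<subseteq> Lv m (\<beta> - d)"
      using level_Suc_subset[OF m q(2)] by simp
    moreover have "outside n m (\<beta> - d)" using assms(3) d unfolding copy_at_def by simp
    ultimately show ?thesis using outside_subset q(1) by simp
  next
    case False
    then have "\<not> in_subcolumn m (off m c + (\<beta> + \<kappa>) + 2 * h m)"
      using return_not_in_subcolumn[OF m b] by blast
    then show ?thesis
      using outside_if_not_in_subcolumn[OF assms(1,2) offset_return_lt[OF m assms(5) b]] by simp
  qed
qed

section \<open>Events decided by the choice of a subcolumn\<close>

definition subcolumn_event :: "nat \<Rightarrow> real set \<Rightarrow> nat set \<Rightarrow> real set \<Rightarrow> bool" where
  "subcolumn_event m B C E \<longleftrightarrow> (\<forall>b<h m. Lv m b \<subseteq> B \<longrightarrow> (\<forall>c<r m.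
     Lv (Suc m) (off m c + b) \<inter> E = (if c \<in> C then Lv (Suc m) (off m c + b) else {})))"

lemma measure_level_inter_eq_sum:
  assumes "m \<ge> 1" "p < h m" "S \<in> sets lebesgue"
  shows "measure lebesgue (Lv m p \<inter> S)
    = (\<Sum>c<r m. measure lebesgue (Lv (Suc m) (off m c + p) \<inter> S))"
proof -
  have eq: "Lv m p \<inter> S = (\<Union>c<r m. Lv (Suc m) (off m c + p) \<inter> S)"
    using level_eq_Union_Suc[OF assms(1,2)] by blast
  have "disjoint_family_on (\<lambda>c. Lv (Suc m) (off m c + p) \<inter> S) {..<r m}"
    unfolding disjoint_family_on_def
  proof (intro ballI impI)
    fix c c' assume c: "c \<in> {..<r m}" "c' \<in> {..<r m}" "c \<noteq> c'"
    then have "off m c + p \<noteq> off m c' + p" using offset_add_inj assms(2) by blast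
    moreover have "off m c + p < h (Suc m)" "off m c' + p < h (Suc m)"
      using offset_lt_hgt_Suc[OF assms(1) _ assms(2)] c by auto
    ultimately show "Lv (Suc m) (off m c + p) \<inter> S \<inter> (Lv (Suc m) (off m c' + p) \<inter> S) = {}"
      using level_disjoint[of "Suc m" "off m c + p" "off m c' + p"] by auto
  qed
  moreover have "emeasure lebesgue (Lv (Suc m) (off m c + p) \<inter> S) \<noteq> \<infinity>" for c
    using emeasure_mono[of "Lv (Suc m) (off m c + p) \<inter> S" "Lv (Suc m) (off m c + p)" lebesgue]
      emeasure_level[of "Suc m"] by (auto simp: top_unique)
  ultimately have "measure lebesgue (\<Union>c<r m. Lv (Suc m) (off m c + p) \<inter> S)
      = (\<Sum>c<r m. measure lebesgue (Lv (Suc m) (off m c + p) \<inter> S))"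
    using assms(3) by (intro measure_finite_Union) auto
  then show ?thesis by (simp only: eq)
qed

lemma measure_level_inter_descend:
  assumes "1 \<le> M" "M \<le> m" "S \<in> sets lebesgue"
    and top: "\<forall>p<h m. Lv m p \<subseteq> B \<longrightarrow> measure lebesgue (Lv m p \<inter> S) = w m * \<alpha>"
  shows "\<forall>p<h M. Lv M p \<subseteq> B \<longrightarrow> measure lebesgue (Lv M p \<inter> S) = w M * \<alpha>"
  using assms(2)
proof (induction M rule: inc_induct)
  case (step M')
  have M': "M' \<ge> 1" using step.hyps assms(1) by simp
  show ?case
  proof (intro allI impI)
    fix p assume p: "p < h M'" "Lv M' p \<subseteq> B"
    have "measure lebesgue (Lv M' p \<inter> S)
        = (\<Sum>c<r M'. measure lebesgue (Lv (Suc M') (off M' c + p) \<inter> S))"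
      using measure_level_inter_eq_sum[OF M' p(1) assms(3)] .
    also have "\<dots> = (\<Sum>c<r M'. w (Suc M') * \<alpha>)"
      using step.IH level_Suc_subset[OF M' _ p(1)] offset_lt_hgt_Suc[OF M' _ p(1)] p(2)
      by (intro sum.cong) blast+
    also have "\<dots> = w M' * \<alpha>" using w_Suc[OF M'] L_less_r[OF M'] by simp
    finally show "measure lebesgue (Lv M' p \<inter> S) = w M' * \<alpha>" .
  qed
qed (use top in blast)

lemma measure_level_inter_subcolumn_event:
  assumes "m \<ge> 1" "p < h m" "Lv m p \<subseteq> B" "subcolumn_event m B C E" "C \<subseteq> {..<r m}"
    and "E \<in> sets lebesgue" "Z \<in> sets lebesgue"
    and Z: "\<forall>c\<in>C. measure lebesgue (Lv (Suc m) (off m c + p) \<inter> Z) = w (Suc m) * \<alpha>"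
  shows "measure lebesgue (Lv m p \<inter> (E \<inter> Z)) = w m * (card C / r m * \<alpha>)"
proof -
  have "measure lebesgue (Lv m p \<inter> (E \<inter> Z))
      = (\<Sum>c<r m. measure lebesgue (Lv (Suc m) (off m c + p) \<inter> (E \<inter> Z)))"
    using assms(6,7) by (intro measure_level_inter_eq_sum[OF assms(1,2)]) simp
  also have "\<dots> = (\<Sum>c<r m. if c \<in> C then w (Suc m) * \<alpha> else 0)"
  proof (rule sum.cong)
    fix c assume "c \<in> {..<r m}"
    then have "Lv (Suc m) (off m c + p) \<inter> E = (if c \<in> C then Lv (Suc m) (off m c + p) else {})"
      using assms(2-4) unfolding subcolumn_event_def by auto
    then show "measure lebesgue (Lv (Suc m) (off m c + p) \<inter> (E \<inter> Z))
        = (if c \<in> C then w (Suc m) * \<alpha> else 0)"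
      using Z by (simp add: Int_assoc[symmetric] split: if_splits)
  qed simp
  also have "\<dots> = card C * (w (Suc m) * \<alpha>)"
  proof -
    have "{..<r m} \<inter> {c. c \<in> C} = C" using assms(5) by blast
    then show ?thesis by (simp add: sum.If_cases)
  qed
  also have "\<dots> = w m * (card C / r m * \<alpha>)"
    using w_Suc[OF assms(1)] by simp
  finally show ?thesis .
qed

lemma measure_level_inter_INT:
  fixes E :: "nat \<Rightarrow> real set" and F :: "nat set"
  assumes \<sigma>: "strict_mono \<sigma>" "\<And>i. 1 \<le> \<sigma> i"
    and E: "\<And>i. E i \<in> sets lebesgue" "\<And>i. C i \<subseteq> {..<r (\<sigma> i)}"
      "\<And>i. subcolumn_event (\<sigma> i) B (C i) (E i)"
    and "finite F" "1 \<le> M" "p < h M" "Lv M p \<subseteq> B" "\<forall>i\<in>F. M \<le> \<sigma> i"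
  shows "measure lebesgue (Lv M p \<inter> \<Inter>(E ` F)) = w M * (\<Prod>i\<in>F. card (C i) / r (\<sigma> i))"
  using assms(6-)
proof (induction F arbitrary: M p rule: finite_linorder_min_induct)
  case empty
  then show ?case using measure_level by simp
next
  case (insert b A)
  define Z where "Z = \<Inter>(E ` A)"
  define \<alpha> where "\<alpha> = (\<Prod>i\<in>A. card (C i) / r (\<sigma> i))"
  have Z: "Z \<in> sets lebesgue"
    using E(1) insert.hyps(1) unfolding Z_def by (cases "A = {}") (auto intro: sets.finite_INT)
  have later: "\<forall>a\<in>A. Suc (\<sigma> b) \<le> \<sigma> a"
    using insert.hyps(2) \<sigma>(1) by (auto simp: strict_mono_less Suc_le_eq)
  have children: "measure lebesgue (Lv (Suc (\<sigma> b)) (off (\<sigma> b) c + p') \<inter> Z) = w (Suc (\<sigma> b)) * \<alpha>"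
    if "c < r (\<sigma> b)" "p' < h (\<sigma> b)" "Lv (\<sigma> b) p' \<subseteq> B" for c p'
  proof -
    have "Lv (Suc (\<sigma> b)) (off (\<sigma> b) c + p') \<subseteq> B"
      using level_Suc_subset[OF \<sigma>(2) that(1,2)] that(3) by blast
    from insert.IH[OF _ offset_lt_hgt_Suc[OF \<sigma>(2) that(1,2)] this later]
    show ?thesis unfolding Z_def \<alpha>_def by simp
  qed
  have top: "\<forall>p'<h (\<sigma> b). Lv (\<sigma> b) p' \<subseteq> B \<longrightarrow> measure lebesgue (Lv (\<sigma> b) p' \<inter> (E b \<inter> Z))
      = w (\<sigma> b) * (card (C b) / r (\<sigma> b) * \<alpha>)"
  proof (intro allI impI)
    fix p' assume p': "p' < h (\<sigma> b)" "Lv (\<sigma> b) p' \<subseteq> B"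
    show "measure lebesgue (Lv (\<sigma> b) p' \<inter> (E b \<inter> Z)) = w (\<sigma> b) * (card (C b) / r (\<sigma> b) * \<alpha>)"
      by (rule measure_level_inter_subcolumn_event[OF \<sigma>(2) p' E(3) E(2) E(1) Z])
        (use children E(2) p' in blast)
  qed
  have "M \<le> \<sigma> b" using insert.prems(4) by simp
  from measure_level_inter_descend[OF insert.prems(1) this _ top] insert.prems(2,3)
  have "measure lebesgue (Lv M p \<inter> (E b \<inter> Z)) = w M * (card (C b) / r (\<sigma> b) * \<alpha>)"
    using E(1) Z by blast
  moreover have "b \<notin> A" using insert.hyps(2) by blast
  ultimately show ?case
    using insert.hyps(1) unfolding Z_def \<alpha>_def by simp
qed

lemma indep_subcolumn_events:
  fixes E :: "nat \<Rightarrow> real set"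
  assumes "1 \<le> n" "\<kappa> < h n" "strict_mono \<sigma>" "\<forall>i. n \<le> \<sigma> i"
    and "\<And>i. E i \<in> sets lebesgue" "\<And>i. C i \<subseteq> {..<r (\<sigma> i)}"
      "\<And>i. subcolumn_event (\<sigma> i) (Lv n \<kappa>) (C i) (E i)"
  shows "prob_space.indep_events (uniform_measure lebesgue (Lv n \<kappa>)) E UNIV"
proof (rule indep_events_uniform_measureI[where p = "\<lambda>i. card (C i) / r (\<sigma> i)"])
  have "emeasure lebesgue (Lv n \<kappa>) = ennreal (w n)" by (rule emeasure_level[OF assms(1)])
  then show "emeasure lebesgue (Lv n \<kappa>) \<noteq> 0" "emeasure lebesgue (Lv n \<kappa>) \<noteq> \<infinity>"
    using w_pos[OF assms(1)] by auto
  have "\<forall>i. 1 \<le> \<sigma> i" using assms(1,4) order_trans by blast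
  then show "measure lebesgue (Lv n \<kappa> \<inter> \<Inter>(E ` F))
      = measure lebesgue (Lv n \<kappa>) * (\<Prod>i\<in>F. card (C i) / r (\<sigma> i))" if "finite F" for F
    using measure_level_inter_INT[OF assms(3) _ assms(5-7) that assms(1,2) order.refl] assms(4)
      measure_level[OF assms(1)] by simp
qed (use assms(5) in auto)

lemma subcolumn_event_preimage:
  assumes "1 \<le> n" "n \<le> m" "k < h n" "k' < h n" and small: "\<forall>e<L. s m ! e < h n"
  shows "subcolumn_event m (Lv n k) ((\<lambda>e. r m - L - 1 + e) ` {e. e < L \<and> s m ! e + k' = k})
           {x \<in> X. (T ^^ (2 * h m)) x \<in> Lv n k'}"
  unfolding subcolumn_event_def
proof (intro allI impI)
  fix b c assume b: "b < h m" "Lv m b \<subseteq> Lv n k" and c: "c < r m"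
  have m: "m \<ge> 1" using assms by simp
  obtain \<beta> where \<beta>: "b = \<beta> + k" "copy_at n m \<beta>"
    using copy_at_if_inside[OF assms(1,2) b(1) assms(3) b(2)] by blast
  define P where "P = Lv (Suc m) (off m c + b)"
  define Q where "Q = Lv (Suc m) (off m c + b + 2 * h m)"
  have TP: "(T ^^ (2 * h m)) ` P = Q"
    unfolding P_def Q_def using T_iter_image_level offset_return_lt[OF m c b(1)] by simp
  have PX: "P \<subseteq> X" unfolding P_def using level_subset_X offset_lt_hgt_Suc[OF m c b(1)] by simp
  let ?C = "(\<lambda>e. r m - L - 1 + e) ` {e. e < L \<and> s m ! e + k' = k}"
  show "P \<inter> {x \<in> X. (T ^^ (2 * h m)) x \<in> Lv n k'} = (if c \<in> ?C then P else {})"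
  proof (cases "c \<in> ?C")
    case True
    then obtain e where "e < L" "c = r m - L - 1 + e" "s m ! e + k' = k" by blast
    then have "Q \<subseteq> Lv n k'"
      using return_level_inside[OF m \<beta>(2) assms(3)] \<beta>(1) unfolding Q_def by fastforce
    then show ?thesis using True TP PX by auto
  next
    case False
    have "Q \<inter> Lv n k' = {}"
    proof (cases "\<exists>e<L. c = r m - L - 1 + e \<and> s m ! e \<le> k")
      case True
      then obtain e where e: "e < L" "c = r m - L - 1 + e" "s m ! e \<le> k" by blast
      then have "k - s m ! e \<noteq> k'" "k - s m ! e < h n" using False assms(3) by force+
      moreover have "Q \<subseteq> Lv n (k - s m ! e)"
        using return_level_inside[OF m \<beta>(2) assms(3) e] \<beta>(1) unfolding Q_def by simp
      ultimately show ?thesis using level_disjoint[OF assms(1)] assms(3,4) by fastforce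
    next
      case False
      then show ?thesis
        using return_level_outside[OF assms(1,2) \<beta>(2) assms(3) c small] \<beta>(1) assms(4)
        unfolding outside_def Q_def by simp
    qed
    then show ?thesis using False TP by auto
  qed
qed

lemma return_into_level_iff:
  assumes "1 \<le> n" "n \<le> m" "k < h n" "k' < h n" and small: "\<forall>e<L. s m ! e < h n"
    and b: "b < h m" "Lv m b \<subseteq> Lv n k'" and c: "c < r m"
  shows "c \<in> (\<lambda>e. r m - L + e) ` {e. e < L \<and> s m ! e + k' = k} \<longleftrightarrow>
    (\<exists>a\<in>{a. a < h m \<and> Lv m a \<subseteq> Lv n k}. \<exists>c'<r m. off m c' + a + 2 * h m = off m c + b)"
    (is "c \<in> ?C \<longleftrightarrow> (\<exists>a\<in>?A. _)")
proof -
  have m: "m \<ge> 1" using assms by simp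
  show ?thesis
  proof
    assume "c \<in> ?C"
    then obtain e where e: "e < L" "c = r m - L + e" "s m ! e + k' = k" by blast
    obtain \<beta> where \<beta>: "b = \<beta> + k'" "copy_at n m \<beta>"
      using copy_at_if_inside[OF assms(1,2) b(1) assms(4) b(2)] by blast
    define c' where "c' = r m - L - 1 + e"
    have q: "off m c' + (\<beta> + k) + 2 * h m = off m (Suc c') + (\<beta> + k - s m ! e)" "Suc c' < r m"
      using return_to_next_subcolumn[OF m e(1) c'_def] e(3) by auto
    have "Suc c' = c" using e(2) L_less_r[OF m] unfolding c'_def by simp
    moreover have "\<beta> + k - s m ! e = b" using \<beta>(1) e(3) by simp
    ultimately have "off m c' + (\<beta> + k) + 2 * h m = off m c + b" using q(1) by simp
    moreover have "\<beta> + k \<in> ?A" using \<beta>(2) assms(3) unfolding copy_at_def by auto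
    moreover have "c' < r m" using q(2) by simp
    ultimately show "\<exists>a\<in>?A. \<exists>c'<r m. off m c' + a + 2 * h m = off m c + b" by blast
  next
    assume "\<exists>a\<in>?A. \<exists>c'<r m. off m c' + a + 2 * h m = off m c + b"
    then obtain a c' where a: "a < h m" "Lv m a \<subseteq> Lv n k" "c' < r m"
      and q: "off m c' + a + 2 * h m = off m c + b" by auto
    obtain \<beta> where \<beta>: "a = \<beta> + k" "copy_at n m \<beta>"
      using copy_at_if_inside[OF assms(1,2) a(1) assms(3) a(2)] by blast
    have inside: "Lv (Suc m) (off m c + b) \<subseteq> Lv n k'"
      using level_Suc_subset[OF m c b(1)] b(2) by blast
    then obtain e where e: "e < L" "c' = r m - L - 1 + e" "s m ! e \<le> k"
      using return_level_outside[OF assms(1,2) \<beta>(2) assms(3) a(3) small] level_nonempty[of "Suc m"]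
        q \<beta>(1) assms(4) unfolding outside_def by fastforce
    have "Lv (Suc m) (off m c + b) \<subseteq> Lv n (k - s m ! e)"
      using return_level_inside[OF m \<beta>(2) assms(3) e] q \<beta>(1) by simp
    then have "k - s m ! e = k'"
      using level_inside_unique[OF assms(1) _ _ inside] assms(3,4) by simp
    moreover have "off m (Suc c') + (a - s m ! e) = off m c + b" "Suc c' < r m"
      using return_to_next_subcolumn[OF m e(1,2)] e(3) q \<beta>(1) by auto
    then have "Suc c' = c" using offset_add_inj[of m "Suc c'"] a(1) b(1) by simp
    ultimately show "c \<in> ?C" using e L_less_r[OF m] by force
  qed
qed

lemma subcolumn_event_image:
  assumes "1 \<le> n" "n \<le> m" "k < h n" "k' < h n" and small: "\<forall>e<L. s m ! e < h n"
  shows "subcolumn_event m (Lv n k') ((\<lambda>e. r m - L + e) ` {e. e < L \<and> s m ! e + k' = k})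
           ((T ^^ (2 * h m)) ` Lv n k)"
  unfolding subcolumn_event_def
proof (intro allI impI)
  fix b c assume b: "b < h m" "Lv m b \<subseteq> Lv n k'" and c: "c < r m"
  have m: "m \<ge> 1" using assms by simp
  let ?C = "(\<lambda>e. r m - L + e) ` {e. e < L \<and> s m ! e + k' = k}"
  let ?A = "{a. a < h m \<and> Lv m a \<subseteq> Lv n k}"
  note hits = return_into_level_iff[OF assms b c]
  have disj: "Lv (Suc m) (off m c' + a + 2 * h m) \<inter> Lv (Suc m) (off m c + b) = {}"
    if "a \<in> ?A" "c' < r m" "off m c' + a + 2 * h m \<noteq> off m c + b" for a c'
  proof -
    have "off m c' + a + 2 * h m < h (Suc m)" using offset_return_lt[OF m that(2)] that(1) by simp
    then show ?thesis
      using level_disjoint[of "Suc m" _ "off m c + b"] offset_lt_hgt_Suc[OF m c b(1)] that(3) by simp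
  qed
  show "Lv (Suc m) (off m c + b) \<inter> (T ^^ (2 * h m)) ` Lv n k
      = (if c \<in> ?C then Lv (Suc m) (off m c + b) else {})"
  proof (cases "c \<in> ?C")
    case True
    then obtain a c' where "a \<in> ?A" "c' < r m" "off m c' + a + 2 * h m = off m c + b"
      using hits by blast
    then have "Lv (Suc m) (off m c + b) \<subseteq> (T ^^ (2 * h m)) ` Lv n k"
      unfolding image_level_eq_Union[OF assms(1-3)] by force
    then show ?thesis using True by auto
  next
    case False
    have "x \<notin> Lv (Suc m) (off m c' + a + 2 * h m)"
      if "x \<in> Lv (Suc m) (off m c + b)" "a \<in> ?A" "c' < r m" for x a c'
      using disj[of a c'] that hits False by blast
    then show ?thesis using False unfolding image_level_eq_Union[OF assms(1-3)] by auto
  qed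
qed

theorem indep_return_events:
  fixes \<sigma> :: "nat \<Rightarrow> nat"
  assumes "1 \<le> n" "k < h n" "k' < h n" "strict_mono \<sigma>" "\<forall>i. n \<le> \<sigma> i"
    and small: "\<forall>i. \<forall>e<L. s (\<sigma> i) ! e < h n"
  shows "prob_space.indep_events (uniform_measure lebesgue (Lv n k))
           (\<lambda>i. {x \<in> X. (T ^^ (2 * h (\<sigma> i))) x \<in> Lv n k'}) UNIV
       \<and> prob_space.indep_events (uniform_measure lebesgue (Lv n k'))
           (\<lambda>i. (T ^^ (2 * h (\<sigma> i))) ` Lv n k) UNIV"
proof (intro conjI)
  have stage: "n \<le> \<sigma> i" "\<forall>e<L. s (\<sigma> i) ! e < h n" for i
    using assms by auto
  have rL: "L < r (\<sigma> i)" for i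
    using L_less_r assms(1,5) order_trans by blast
  have tails: "(\<lambda>e. r (\<sigma> i) - L - 1 + e) ` {e. e < L \<and> s (\<sigma> i) ! e + k' = k} \<subseteq> {..<r (\<sigma> i)}"
    "(\<lambda>e. r (\<sigma> i) - L + e) ` {e. e < L \<and> s (\<sigma> i) ! e + k' = k} \<subseteq> {..<r (\<sigma> i)}" for i
    using rL[of i] by auto
  show "prob_space.indep_events (uniform_measure lebesgue (Lv n k))
      (\<lambda>i. {x \<in> X. (T ^^ (2 * h (\<sigma> i))) x \<in> Lv n k'}) UNIV"
    by (rule indep_subcolumn_events[OF assms(1,2,4,5) sets_preimage_level[OF assms(1,3)] tails(1)
          subcolumn_event_preimage[OF assms(1) stage(1) assms(2,3) stage(2)]])
  show "prob_space.indep_events (uniform_measure lebesgue (Lv n k'))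
      (\<lambda>i. (T ^^ (2 * h (\<sigma> i))) ` Lv n k) UNIV"
    by (rule indep_subcolumn_events[OF assms(1,3,4,5) sets_image_level[OF assms(1) stage(1) assms(2)]
          tails(2) subcolumn_event_image[OF assms(1) stage(1) assms(2,3) stage(2)]])
qed

end

theorem mainTheorem10:
  fixes L :: nat and v s :: "nat \<Rightarrow> nat list" and r :: "nat \<Rightarrow> nat"
    and lev :: "nat \<Rightarrow> nat \<Rightarrow> real" and w :: "nat \<Rightarrow> real"
    and X :: "real set" and T :: "real \<Rightarrow> real"
    and n k k' j :: nat and I J :: "real set" and t :: "nat \<Rightarrow> nat"
  assumes "VLstar L v s r lev w X T"
    and "n \<ge> 1"
    and "k < hgt L r s n" and "k' < hgt L r s n"
    and "I = level lev w n k" and "J = level lev w n k'"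
    and "j \<ge> 1" and "last (v j) < hgt L r s n"
    and "t = (\<lambda>i. 2 * hgt L r s (2 ^ (j - 1) + (i + n) * 2 ^ j))"
  shows "prob_space.indep_events (uniform_measure lebesgue I)
           (\<lambda>i. {x \<in> X. (T ^^ t i) x \<in> J}) UNIV
       \<and> prob_space.indep_events (uniform_measure lebesgue J)
           (\<lambda>i. (T ^^ t i) ` I) UNIV"
proof -
  interpret cutting_stacking L v s r lev w X T
    using assms(1) by unfold_locales
  define \<sigma> where "\<sigma> i = 2 ^ (j - 1) + (i + n) * 2 ^ j" for i
  have "strict_mono \<sigma>" unfolding strict_mono_def \<sigma>_def by simp
  moreover have "n \<le> \<sigma> i" for i
    using mult_le_mono[of n "i + n" 1 "2 ^ j"] unfolding \<sigma>_def by simp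
  moreover have "s (\<sigma> i) ! e < hgt L r s n" if "e < L" for i e
  proof -
    have "s (\<sigma> i) = v j" using s_dyadic[OF assms(7)] unfolding \<sigma>_def .
    moreover have "length (v j) = L" "sorted (v j)"
      using is_VL_v[OF assms(7)] by (auto simp: is_VL_def strict_sorted_imp_sorted)
    ultimately show ?thesis using sorted_nth_le_last[of "v j" e] that assms(8) by simp
  qed
  ultimately show ?thesis
    using indep_return_events[OF assms(2-4)] assms(5,6,9) unfolding \<sigma>_def by simp
qed

end
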